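(* Let $C$ and $C'$ be configurations of 2REG, let $v\in C$, and let $t\ge 0$ be an integer with $\mathrm{d}_C((0,0),v)\le t$. Then $C\equiv'_{t,v}C'$ if and only if both of the following hold: (1) $C'$ is a consistent extension of the subset $M(v,t,C)$ of $C$; and (2) $M(v,t,C')\setminus M(v,t,C)=\emptyset$.
   Context: Positions are elements of $\mathbb{Z}^2$. Put $\epsilon_0=(1,0)$, $\epsilon_1=(0,1)$, $\epsilon_2=(-1,0)$, $\epsilon_3=(0,-1)$. Two positions $p,p'$ are adjacent if $p'-p\in\{\epsilon_0,\epsilon_1,\epsilon_2,\epsilon_3\}$. A path is a nonempty sequence of positions in which consecutive positions are adjacent; a set of positions $C$ is connected if any two of its elements are joined by a path inside $C$. A configuration of 2REG is a finite connected set $C\subseteq\mathbb{Z}^2$ containing the origin $(0,0)$ (the position of the general). For $p,p'\in C$, $\mathrm{d}_C(p,p')$ is the number of steps of a shortest path from $p$ to $p'$ inside $C$. For $p\in C$, the boundary condition $\mathrm{bc}_C(p)=(b_0,b_1,b_2,b_3)\in\{0,1\}^4$ has $b_i=1$ iff $p+\epsilon_i\in C$. Available information: for a configuration $C$, $v\in C$ and time $t\ge0$, $\mathrm{ai}(v,t,C)$ is the symbol $\mathrm{Q}$ if $\mathrm{d}_C((0,0),v)>t$, and otherwise the triple $(t,v,X)$ where $X=\{(v',\mathrm{bc}_C(v')) : v'\in C,\ \mathrm{d}_C((0,0),v')+\mathrm{d}_C(v',v)\le t\}$. For configurations $C,C'$, $C\equiv'_{t,v}C'$ means $v\in C\cap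 C'$ and $\mathrm{ai}(v,t,C)=\mathrm{ai}(v,t,C')\ne\mathrm{Q}$. Define $M(v,t,C)=\{v'\in C : \mathrm{d}_C((0,0),v')+\mathrm{d}_C(v',v)\le t\}$. For a configuration $C$, a subset $M\subseteq C$ and a configuration $C'$, $C'$ is a consistent extension of $M$ (as a subset of $C$) if $M\subseteq C'$ and $\mathrm{bc}_C(w)=\mathrm{bc}_{C'}(w)$ for every $w\in M$. *)

theory Defs
  imports Main "HOL-Library.Product_Plus"
begin

type_synonym pos = "int \<times> int"

definition eps :: "nat \<Rightarrow> pos" where
  "eps i = (if i = 0 then (1,0) else if i = 1 then (0,1) else if i = 2 then (-1,0) else (0,-1))"

definition adjacent :: "pos \<Rightarrow> pos \<Rightarrow> bool" where
  "adjacent p p' \<longleftrightarrow> (\<exists>i<4. p' = p + eps i)"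

definition is_path :: "pos list \<Rightarrow> bool" where
  "is_path ps \<longleftrightarrow> ps \<noteq> [] \<and> (\<forall>i. Suc i < length ps \<longrightarrow> adjacent (ps ! i) (ps ! Suc i))"

definition path_in :: "pos set \<Rightarrow> pos \<Rightarrow> pos \<Rightarrow> pos list \<Rightarrow> bool" where
  "path_in C p p' ps \<longleftrightarrow> is_path ps \<and> hd ps = p \<and> last ps = p' \<and> set ps \<subseteq> C"

definition connected_set :: "pos set \<Rightarrow> bool" where
  "connected_set C \<longleftrightarrow> (\<forall>p\<in>C. \<forall>p'\<in>C. \<exists>ps. path_in C p p' ps)"

definition configuration :: "pos set \<Rightarrow> bool" where
  "configuration C \<longleftrightarrow> finite C \<and> connected_set C \<and> (0,0) \<in> C"

definition dist_in :: "pos set \<Rightarrow> pos \<Rightarrow> pos \<Rightarrow> nat" where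
  "dist_in C p p' = (LEAST n. \<exists>ps. path_in C p p' ps \<and> length ps = Suc n)"

definition bc :: "pos set \<Rightarrow> pos \<Rightarrow> bool \<times> bool \<times> bool \<times> bool" where
  "bc C p = (p + eps 0 \<in> C, p + eps 1 \<in> C, p + eps 2 \<in> C, p + eps 3 \<in> C)"

datatype ainfo = Q | Info nat pos "(pos \<times> (bool \<times> bool \<times> bool \<times> bool)) set"

definition ai :: "pos \<Rightarrow> nat \<Rightarrow> pos set \<Rightarrow> ainfo" where
  "ai v t C = (if dist_in C (0,0) v > t then Q
     else Info t v {(v', bc C v') | v'. v' \<in> C \<and> dist_in C (0,0) v' + dist_in C v' v \<le> t})"

definition equiv' :: "nat \<Rightarrow> pos \<Rightarrow> pos set \<Rightarrow> pos set \<Rightarrow> bool" where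
  "equiv' t v C C' \<longleftrightarrow> v \<in> C \<and> v \<in> C' \<and> ai v t C = ai v t C' \<and> ai v t C \<noteq> Q"

definition Mset :: "pos \<Rightarrow> nat \<Rightarrow> pos set \<Rightarrow> pos set" where
  "Mset v t C = {v' \<in> C. dist_in C (0,0) v' + dist_in C v' v \<le> t}"

definition consistent_extension :: "pos set \<Rightarrow> pos set \<Rightarrow> pos set \<Rightarrow> bool" where
  "consistent_extension C M C' \<longleftrightarrow> M \<subseteq> C' \<and> (\<forall>w\<in>M. bc C w = bc C' w)"

end

theory Submission
  imports Defs
begin

text \<open>
  A position on a path from p to q splits it into two paths, so its distances to p and q sum to
  less than the length of the path; conversely, shortest paths from the origin to w and from w to v
  concatenate to a path through w. Hence M(v,t,C) is exactly the set of positions on paths of at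
  most t steps from the origin to v inside C, and every such path lies entirely in M(v,t,C). If C'
  contains M(v,t,C), it contains these paths, so M(v,t,C) \<subseteq> M(v,t,C'); condition (2) then
  gives equality. Equality of the available information amounts to exactly this equality together
  with agreement of the boundary conditions on M(v,t,C).
\<close>

lemma is_path_iff_successively: "is_path ps \<longleftrightarrow> ps \<noteq> [] \<and> successively adjacent ps"
  by (simp add: is_path_def successively_conv_nth)

lemma path_in_append:
  assumes "path_in C p q ps" and "path_in C q r qs"
  shows "path_in C p r (ps @ tl qs)"
proof -
  from assms(2) obtain qs' where "qs = q # qs'"
    by (cases qs) (auto simp: path_in_def is_path_def)
  with assms show ?thesis
    by (cases qs') (auto simp: path_in_def is_path_iff_successively successively_append_iff)
qed

lemma path_in_split:
  assumes "path_in C p q (ys @ x # zs)"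
  shows "path_in C p x (ys @ [x])" and "path_in C x q (x # zs)"
proof -
  have "hd (ys @ [x]) = hd (ys @ x # zs)"
    by (cases ys) simp_all
  with assms show "path_in C p x (ys @ [x])"
    by (auto simp: path_in_def is_path_iff_successively successively_append_iff)
  from assms show "path_in C x q (x # zs)"
    by (auto simp: path_in_def is_path_iff_successively successively_append_iff)
qed

lemma dist_in_less_length:
  assumes "path_in C p q ps"
  shows "dist_in C p q < length ps"
proof -
  from assms obtain n where "length ps = Suc n"
    by (cases ps) (auto simp: path_in_def is_path_def)
  with assms have "dist_in C p q \<le> n"
    unfolding dist_in_def by (blast intro: Least_le)
  with \<open>length ps = Suc n\<close> show ?thesis by simp
qed

lemma dist_in_self: "p \<in> C \<Longrightarrow> dist_in C p p = 0"
  using dist_in_less_length[of C p p "[p]"] by (simp add: path_in_def is_path_def)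

lemma shortest_path_in:
  assumes "connected_set C" and "p \<in> C" and "q \<in> C"
  obtains ps where "path_in C p q ps" and "length ps = Suc (dist_in C p q)"
proof -
  from assms obtain ps where "path_in C p q ps"
    unfolding connected_set_def by blast
  moreover have "length ps = Suc (length ps - 1)"
    using \<open>path_in C p q ps\<close> by (simp add: path_in_def is_path_def)
  ultimately have "\<exists>n ps. path_in C p q ps \<and> length ps = Suc n"
    by blast
  from LeastI_ex[OF this] have "\<exists>ps. path_in C p q ps \<and> length ps = Suc (dist_in C p q)"
    unfolding dist_in_def .
  with that show ?thesis by blast
qed

lemma dist_in_through_path_vertex:
  assumes "path_in C p q ps" and "x \<in> set ps"
  shows "dist_in C p x + dist_in C x q < length ps"
proof -
  from \<open>x \<in> set ps\<close> obtain ys zs where ps: "ps = ys @ x # zs"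
    by (meson split_list)
  have "dist_in C p x < Suc (length ys)"
    using dist_in_less_length[OF path_in_split(1)] assms(1) ps by fastforce
  moreover have "dist_in C x q < Suc (length zs)"
    using dist_in_less_length[OF path_in_split(2)] assms(1) ps by fastforce
  ultimately show ?thesis using ps by simp
qed

lemma in_Mset_if_on_short_path:
  assumes "path_in C (0,0) v ps" and "w \<in> set ps" and "length ps \<le> Suc t"
  shows "w \<in> Mset v t C"
  using dist_in_through_path_vertex[OF assms(1,2)] assms
  unfolding Mset_def path_in_def by auto

lemma Mset_iff_on_short_path:
  assumes "connected_set C" and "(0,0) \<in> C" and "v \<in> C"
  shows "w \<in> Mset v t C \<longleftrightarrow> (\<exists>ps. path_in C (0,0) v ps \<and> w \<in> set ps \<and> length ps \<le> Suc t)"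
proof
  assume w: "w \<in> Mset v t C"
  then have "w \<in> C" by (simp add: Mset_def)
  obtain ps where ps: "path_in C (0,0) w ps" "length ps = Suc (dist_in C (0,0) w)"
    using shortest_path_in[OF assms(1,2) \<open>w \<in> C\<close>] .
  obtain qs where qs: "path_in C w v qs" "length qs = Suc (dist_in C w v)"
    using shortest_path_in[OF assms(1) \<open>w \<in> C\<close> assms(3)] .
  have "path_in C (0,0) v (ps @ tl qs)"
    using path_in_append[OF ps(1) qs(1)] .
  moreover have "w \<in> set (ps @ tl qs)"
    using ps(1) unfolding path_in_def is_path_def by auto
  moreover have "length (ps @ tl qs) \<le> Suc t"
    using w ps(2) qs(2) by (simp add: Mset_def)
  ultimately show "\<exists>ps. path_in C (0,0) v ps \<and> w \<in> set ps \<and> length ps \<le> Suc t"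
    by blast
qed (blast intro: in_Mset_if_on_short_path)

lemma Mset_mono:
  assumes "connected_set C" and "(0,0) \<in> C" and "v \<in> C" and "Mset v t C \<subseteq> C'"
  shows "Mset v t C \<subseteq> Mset v t C'"
proof
  fix w assume "w \<in> Mset v t C"
  then obtain ps where ps: "path_in C (0,0) v ps" "w \<in> set ps" "length ps \<le> Suc t"
    using Mset_iff_on_short_path[OF assms(1-3)] by blast
  have "set ps \<subseteq> Mset v t C"
    using ps by (blast intro: in_Mset_if_on_short_path)
  with ps(1) assms(4) have "path_in C' (0,0) v ps"
    by (auto simp: path_in_def)
  then show "w \<in> Mset v t C'"
    using ps(2,3) by (rule in_Mset_if_on_short_path)
qed

lemma self_in_Mset_iff: "v \<in> Mset v t C \<longleftrightarrow> v \<in> C \<and> dist_in C (0,0) v \<le> t"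
  by (auto simp: Mset_def dist_in_self)

lemma graph_image_eq_iff:
  "(\<lambda>x. (x, f x)) ` A = (\<lambda>x. (x, g x)) ` B \<longleftrightarrow> A = B \<and> (\<forall>x\<in>A. f x = g x)"
  by (auto simp: image_iff)

lemma ai_eq_Info:
  assumes "dist_in C (0,0) v \<le> t"
  shows "ai v t C = Info t v ((\<lambda>w. (w, bc C w)) ` Mset v t C)"
  using assms unfolding ai_def Mset_def by auto

lemma equiv'_iff_Mset:
  "equiv' t v C C' \<longleftrightarrow>
     v \<in> Mset v t C \<and> Mset v t C' = Mset v t C \<and> (\<forall>w\<in>Mset v t C. bc C w = bc C' w)"
  (is "_ \<longleftrightarrow> ?rhs")
proof
  assume "equiv' t v C C'"
  then have "v \<in> C" "v \<in> C'" and ai: "ai v t C = ai v t C'" "ai v t C \<noteq> Q"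
    unfolding equiv'_def by blast+
  then have "dist_in C (0,0) v \<le> t" "dist_in C' (0,0) v \<le> t"
    by (auto simp: ai_def split: if_splits)
  with ai \<open>v \<in> C\<close> \<open>v \<in> C'\<close> show ?rhs
    by (auto simp: ai_eq_Info graph_image_eq_iff self_in_Mset_iff)
next
  assume ?rhs
  then have "v \<in> C" "v \<in> C'" "dist_in C (0,0) v \<le> t" "dist_in C' (0,0) v \<le> t"
    by (metis self_in_Mset_iff)+
  with \<open>?rhs\<close> show "equiv' t v C C'"
    by (auto simp: equiv'_def ai_eq_Info graph_image_eq_iff)
qed

theorem theorem1:
  assumes "configuration C" and "configuration C'"
    and "v \<in> C" and "dist_in C (0,0) v \<le> t"
  shows "equiv' t v C C' \<longleftrightarrow>
           (consistent_extension C (Mset v t C) C' \<and> Mset v t C' - Mset v t C = {})"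
proof
  assume "equiv' t v C C'"
  then have "Mset v t C' = Mset v t C" "\<forall>w\<in>Mset v t C. bc C w = bc C' w"
    by (simp_all add: equiv'_iff_Mset)
  moreover have "Mset v t C' \<subseteq> C'"
    by (auto simp: Mset_def)
  ultimately show "consistent_extension C (Mset v t C) C' \<and> Mset v t C' - Mset v t C = {}"
    by (auto simp: consistent_extension_def)
next
  assume ext: "consistent_extension C (Mset v t C) C' \<and> Mset v t C' - Mset v t C = {}"
  have "Mset v t C \<subseteq> Mset v t C'"
    using assms(1,3) ext by (intro Mset_mono) (auto simp: configuration_def consistent_extension_def)
  with ext have "Mset v t C' = Mset v t C"
    by blast
  moreover have "v \<in> Mset v t C"
    using assms(3,4) by (simp add: self_in_Mset_iff)
  ultimately show "equiv' t v C C'"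
    using ext by (simp add: equiv'_iff_Mset consistent_extension_def)
qed

end
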